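(* For every $i\in\{1,\dots,K\}$, $$\big\|\mathbb P(\tilde v_i\in\cdot)-\mathbb Q\big\|_{tv}\le \mathbb E\!\left(\min(pv_1,1)\,\frac{v_1}{V}\right).$$
   Context: Uniform urn model. Let $v$ be a random variable with values in the positive integers (number of balls of a given color), let $K\ge 1$, let $v_1,\dots,v_K$ be i.i.d. copies of $v$ (numbers of balls of colors $1,\dots,K$) and $V=v_1+\dots+v_K$. Fix a sampling fraction $p\in(0,1)$, with $pV$ assumed to be an integer. Conditionally on $\mathcal F=\{v_1,\dots,v_K\}$, $pV$ balls are drawn with replacement, independently, each drawn ball having color $i$ with probability $v_i/V$. Let $\tilde v_i$ denote the number of drawn balls of color $i$. Let $\mathbb Q$ be the probability distribution on $\{0,1,2,\dots\}$ given by $\mathbb Q_j=\mathbb E\big(\frac{(pv)^j}{j!}e^{-pv}\big)$, $j\ge0$. For integer-valued laws $\mu,\nu$, $\|\mu-\nu\|_{tv}=\sup_{A\subset\mathbb N}|\mu(A)-\nu(A)|=\frac12\sum_{n\ge0}|\mu(\{n\})-\nu(\{n\})|$. *)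

theory Defs
  imports "HOL-Probability.Probability"
begin

text \<open>Colours are indexed 0..K-1 (colour i of the paper is index i-1).
  The urn with ball numbers vs contains vs!i balls of colour i.\<close>
definition urn_balls :: "nat list \<Rightarrow> nat multiset" where
  "urn_balls vs = mset (concat (map (\<lambda>i. replicate (vs ! i) i) [0..<length vs]))"

definition urn_experiment :: "nat pmf \<Rightarrow> nat \<Rightarrow> real \<Rightarrow> (nat list \<times> nat list) pmf" where
  "urn_experiment D K p =
     do { vs \<leftarrow> replicate_pmf K D;
          ds \<leftarrow> replicate_pmf (nat \<lfloor>p * real (sum_list vs)\<rfloor>) (pmf_of_multiset (urn_balls vs));
          return_pmf (vs, ds) }"

definition drawn_count_law :: "nat pmf \<Rightarrow> nat \<Rightarrow> real \<Rightarrow> nat \<Rightarrow> nat pmf" where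
  "drawn_count_law D K p i = map_pmf (\<lambda>(vs, ds). count (mset ds) i) (urn_experiment D K p)"

definition mixed_poisson :: "nat pmf \<Rightarrow> real \<Rightarrow> nat \<Rightarrow> real" where
  "mixed_poisson D p j = measure_pmf.expectation D (\<lambda>v. (p * real v) ^ j / fact j * exp (- p * real v))"

definition tv_dist :: "nat pmf \<Rightarrow> (nat \<Rightarrow> real) \<Rightarrow> real" where
  "tv_dist \<mu> q = (1/2) * (\<Sum>n. \<bar>pmf \<mu> n - q n\<bar>)"

end

theory Submission
  imports Defs
begin

(* Conditionally on the colour counts vs, every one of the N = p V draws has
   colour i with probability q = v_i / V, independently, so the count of colour i is
   Binomial(N, q), and N q = p v_i.  The classical Stein-Chen estimate (Barbour-Hall)
   bounds the l1-distance between Binomial(N, q) and Poisson(N q) by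
   2 (1 - exp (-N q)) q <= 2 min (p v_i, 1) v_i / V.  Averaging over vs (the law of the
   drawn count and the mixed Poisson law are both mixtures over vs) gives the bound with
   colour i, and exchangeability of the i.i.d. counts replaces colour i by colour 1. *)

section \<open>Poisson weights\<close>

definition pois :: "real \<Rightarrow> nat \<Rightarrow> real" where
  "pois l r = l ^ r / fact r * exp (- l)"

definition pois_cdf :: "real \<Rightarrow> nat \<Rightarrow> real" where
  "pois_cdf l j = (\<Sum>r\<le>j. pois l r)"

definition pois_tail :: "real \<Rightarrow> nat \<Rightarrow> real" where
  "pois_tail l j = (\<Sum>s. pois l (s + j))"

lemma pois_pos: "l > 0 \<Longrightarrow> pois l r > 0"
  by (simp add: pois_def)

lemma pois_Suc: "pois l (Suc r) = pois l r * l / real (Suc r)"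
proof -
  have f: "(fact (Suc r)::real) = real (Suc r) * fact r" by simp
  have "l ^ Suc r / fact (Suc r) = (l ^ r / fact r) * (l / real (Suc r))"
    unfolding f power_Suc times_divide_times_eq by (simp only: mult.commute)
  thus ?thesis unfolding pois_def by simp
qed

lemma pois_sums: "pois l sums 1"
proof -
  have "(\<lambda>n. l ^ n /\<^sub>R fact n) sums exp l" by (rule exp_converges)
  hence "(\<lambda>n. l ^ n / fact n) sums exp l" by (simp add: divide_inverse mult.commute)
  hence "(\<lambda>n. l ^ n / fact n * exp (- l)) sums (exp l * exp (- l))" by (rule sums_mult2)
  thus ?thesis unfolding pois_def[abs_def] by (simp add: exp_minus)
qed

lemma pois_summable_shift: "summable (\<lambda>s. pois l (s + j))"
  using sums_summable[OF pois_sums] summable_iff_shift by blast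

lemma pois_le_1: assumes "0 \<le> l" shows "0 \<le> pois l k \<and> pois l k \<le> 1"
proof
  show "0 \<le> pois l k" using assms by (simp add: pois_def)
  have "sum (pois l) {k} \<le> suminf (pois l)"
    by (rule sum_le_suminf[OF sums_summable[OF pois_sums]]) (use assms in \<open>auto simp: pois_def\<close>)
  thus "pois l k \<le> 1" using sums_unique[OF pois_sums] by simp
qed

lemma pois_tail_split: "pois_tail l j = pois l j + pois_tail l (Suc j)"
proof -
  have "(\<Sum>n. pois l (Suc n + j)) = pois_tail l j - pois l (0 + j)"
    unfolding pois_tail_def by (rule suminf_split_head[OF pois_summable_shift])
  thus ?thesis by (simp add: pois_tail_def)
qed

lemma pois_cdf_tail: "pois_cdf l j + pois_tail l (Suc j) = 1"
proof -
  have "suminf (pois l) = (\<Sum>n. pois l (n + Suc j)) + (\<Sum>i<Suc j. pois l i)"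
    by (rule suminf_split_initial_segment[OF sums_summable[OF pois_sums]])
  moreover have "suminf (pois l) = 1" using pois_sums sums_unique by metis
  ultimately show ?thesis unfolding pois_cdf_def pois_tail_def by (simp add: lessThan_Suc_atMost)
qed

lemma pois_cdf_0: "pois_cdf l 0 = pois l 0"
  by (simp add: pois_cdf_def)

lemma pois_cdf_Suc: "pois_cdf l (Suc j) = pois_cdf l j + pois l (Suc j)"
  by (simp add: pois_cdf_def)

text \<open>The Poisson weights are log-concave: the ratio of consecutive weights decreases.
  This is what makes the ratios of distribution and tail functions to the weights monotone.\<close>
lemma pois_log_concave:
  assumes "l > 0" "r \<le> m"
  shows "pois l r * pois l (Suc m) \<le> pois l (Suc r) * pois l m"
proof -
  have "pois l r * pois l (Suc m) = pois l r * pois l m * (l / real (Suc m))"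
    by (simp add: pois_Suc)
  also have "\<dots> \<le> pois l r * pois l m * (l / real (Suc r))"
    using assms pois_pos[of l] by (intro mult_left_mono divide_left_mono) (auto intro: less_imp_le)
  also have "\<dots> = pois l (Suc r) * pois l m" by (simp add: pois_Suc)
  finally show ?thesis .
qed

lemma pois_cdf_ratio_mono:
  assumes "l > 0"
  shows "pois_cdf l m * pois l (Suc m) \<le> pois_cdf l (Suc m) * pois l m"
proof -
  have "pois_cdf l m * pois l (Suc m) = (\<Sum>r\<le>m. pois l r * pois l (Suc m))"
    by (simp add: pois_cdf_def sum_distrib_right)
  also have "\<dots> \<le> (\<Sum>r\<le>m. pois l (Suc r) * pois l m)"
    by (rule sum_mono) (use pois_log_concave assms in auto)
  also have "\<dots> = (pois_cdf l (Suc m) - pois l 0) * pois l m"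
    by (simp add: pois_cdf_def sum_distrib_right sum.atMost_Suc_shift del: sum.atMost_Suc)
  also have "\<dots> \<le> pois_cdf l (Suc m) * pois l m"
    using pois_pos[OF assms] by (simp add: algebra_simps less_imp_le)
  finally show ?thesis .
qed

lemma pois_tail_ratio_mono:
  assumes "l > 0"
  shows "pois_tail l (Suc (Suc m)) * pois l m \<le> pois_tail l (Suc m) * pois l (Suc m)"
proof -
  have "pois_tail l (Suc (Suc m)) * pois l m = (\<Sum>s. pois l (s + Suc (Suc m)) * pois l m)"
    unfolding pois_tail_def by (rule suminf_mult2[OF pois_summable_shift])
  also have "\<dots> \<le> (\<Sum>s. pois l (s + Suc m) * pois l (Suc m))"
  proof (rule suminf_le)
    fix s
    have "pois l m * pois l (Suc (s + Suc m)) \<le> pois l (Suc m) * pois l (s + Suc m)"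
      by (rule pois_log_concave[OF assms]) simp
    thus "pois l (s + Suc (Suc m)) * pois l m \<le> pois l (s + Suc m) * pois l (Suc m)"
      by (simp add: mult.commute)
  qed (intro summable_mult2 pois_summable_shift)+
  also have "\<dots> = pois_tail l (Suc m) * pois l (Suc m)"
    unfolding pois_tail_def by (rule suminf_mult2[OF pois_summable_shift, symmetric])
  finally show ?thesis .
qed

lemma pois_cdf_diagonal:
  assumes "l > 0"
  shows "l / real (Suc m) * pois_cdf l m \<le> pois_cdf l (Suc m) - pois l 0"
proof -
  have "l / real (Suc m) * pois_cdf l m = (\<Sum>r\<le>m. pois l r * (l / real (Suc m)))"
    unfolding pois_cdf_def sum_distrib_left by (simp add: mult.commute)
  also have "\<dots> \<le> (\<Sum>r\<le>m. pois l r * (l / real (Suc r)))"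
    using assms pois_pos[OF assms]
    by (intro sum_mono mult_left_mono divide_left_mono) (auto intro: less_imp_le)
  also have "\<dots> = pois_cdf l (Suc m) - pois l 0"
    by (simp add: pois_cdf_def sum.atMost_Suc_shift pois_Suc sum_divide_distrib del: sum.atMost_Suc)
  finally show ?thesis .
qed

section \<open>The Stein equation for the Poisson law\<close>

text \<open>The solution g with g 0 = 0 of the Stein equation
  \<open>l * g (Suc j) - j * g j = [j = k] - pois l k\<close> (see \<open>stein_equation\<close>).\<close>
definition stein_sol :: "real \<Rightarrow> nat \<Rightarrow> nat \<Rightarrow> real" where
  "stein_sol l k j =
     (if j = 0 then 0
      else if j \<le> k then - pois l k * pois_cdf l (j - 1) / (l * pois l (j - 1))
      else pois l k * pois_tail l j / (l * pois l (j - 1)))"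

lemma stein_sol_times_index:
  assumes "l > 0" "j = Suc i"
  shows "real j * stein_sol l k j =
           (if j \<le> k then - pois l k * pois_cdf l i / pois l j
            else pois l k * pois_tail l j / pois l j)"
proof -
  have "real (Suc i) * (a / (l * pois l i)) = a / pois l (Suc i)" for a
    using assms pois_pos[OF assms(1), of i] by (simp add: pois_Suc field_simps)
  thus ?thesis unfolding stein_sol_def assms(2) by (simp add: mult_minus_right)
qed

lemma stein_equation:
  assumes l: "l > 0"
  shows "l * stein_sol l k (Suc j) - real j * stein_sol l k j = (if j = k then 1 else 0) - pois l k"
proof -
  have pj: "pois l j > 0" and pk: "pois l k > 0" using pois_pos[OF l] by auto
  consider (lt) "j < k" | (eq) "j = k" | (gt) "j > k" by linarith
  thus ?thesis
  proof cases
    case lt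
    have lg: "l * stein_sol l k (Suc j) = - pois l k * pois_cdf l j / pois l j"
      unfolding stein_sol_def using lt l by simp
    show ?thesis
    proof (cases j)
      case 0
      thus ?thesis using lg lt pj by (simp add: pois_cdf_0)
    next
      case (Suc i)
      have "l * stein_sol l k (Suc j) - real j * stein_sol l k j
            = - pois l k * (pois_cdf l j - pois_cdf l i) / pois l j"
        using lg stein_sol_times_index[OF l Suc] lt by (simp add: diff_divide_distrib algebra_simps)
      also have "pois_cdf l j - pois_cdf l i = pois l j" using Suc by (simp add: pois_cdf_Suc)
      finally show ?thesis using pj lt by simp
    qed
  next
    case eq
    have lg: "l * stein_sol l k (Suc j) = 1 - pois_cdf l k"
      unfolding stein_sol_def using eq l pk pois_cdf_tail[of l k] by simp
    show ?thesis
    proof (cases j)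
      case 0
      thus ?thesis using lg eq by (simp add: pois_cdf_0)
    next
      case (Suc i)
      have "real j * stein_sol l k j = - pois_cdf l i"
        using stein_sol_times_index[OF l Suc] eq pk by simp
      thus ?thesis using lg eq Suc pois_cdf_Suc[of l i] by simp
    qed
  next
    case gt
    have lg: "l * stein_sol l k (Suc j) = pois l k * pois_tail l (Suc j) / pois l j"
      unfolding stein_sol_def using gt l by simp
    have "l * stein_sol l k (Suc j) - real j * stein_sol l k j
          = - pois l k * (pois_tail l j - pois_tail l (Suc j)) / pois l j"
      using lg stein_sol_times_index[OF l, of j "j - 1" k] gt
      by (simp add: diff_divide_distrib algebra_simps)
    also have "pois_tail l j - pois_tail l (Suc j) = pois l j" using pois_tail_split[of l j] by simp
    finally show ?thesis using pj gt by simp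
  qed
qed

lemma stein_sol_increment:
  assumes l: "l > 0" and j: "j = Suc i"
  shows "stein_sol l k (Suc j) - stein_sol l k j \<le> (if k = j then (1 - exp (- l)) / l else 0)"
proof -
  have pi: "pois l i > 0" and psi: "pois l (Suc i) > 0" and pk: "pois l k > 0"
    using pois_pos[OF l] by auto
  consider (lt) "Suc j \<le> k" | (eq) "j = k" | (gt) "k < j" by linarith
  thus ?thesis
  proof cases
    case lt
    have "pois_cdf l i / pois l i \<le> pois_cdf l (Suc i) / pois l (Suc i)"
      using pois_cdf_ratio_mono[OF l, of i] pi psi by (simp add: divide_simps mult.commute)
    hence "(pois l k / l) * (pois_cdf l i / pois l i) \<le> (pois l k / l) * (pois_cdf l (Suc i) / pois l (Suc i))"
      using pk l by (intro mult_left_mono) auto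
    thus ?thesis using lt j unfolding stein_sol_def by simp
  next
    case eq
    have g1: "stein_sol l k (Suc j) = (1 - pois_cdf l k) / l"
      unfolding stein_sol_def using eq pk l pois_cdf_tail[of l k] by simp
    have "stein_sol l k j = - pois l k * pois_cdf l i / (l * pois l i)"
      unfolding stein_sol_def using eq j by (simp add: eq[symmetric])
    also have "\<dots> = - pois_cdf l i / real (Suc i)"
      using eq j pois_Suc[of l i] pi l by (simp add: divide_simps)
    finally have g2: "stein_sol l k j = - pois_cdf l i / real (Suc i)" .
    have "stein_sol l k (Suc j) - stein_sol l k j
          = (1 - pois_cdf l k + l / real (Suc i) * pois_cdf l i) / l"
      unfolding g1 g2 using l by (simp add: field_simps)
    also have "\<dots> \<le> (1 - pois l 0) / l"
      using pois_cdf_diagonal[OF l, of i] eq j l by (intro divide_right_mono) auto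
    finally show ?thesis using eq by (simp add: pois_def)
  next
    case gt
    have "pois_tail l (Suc (Suc i)) / pois l (Suc i) \<le> pois_tail l (Suc i) / pois l i"
      using pois_tail_ratio_mono[OF l, of i] pi psi by (simp add: divide_simps mult.commute)
    hence "(pois l k / l) * (pois_tail l (Suc (Suc i)) / pois l (Suc i))
           \<le> (pois l k / l) * (pois_tail l (Suc i) / pois l i)"
      using pk l by (intro mult_left_mono) auto
    thus ?thesis using gt j unfolding stein_sol_def by simp
  qed
qed

text \<open>Summing the increments over any finite set of targets k only picks up the diagonal.\<close>
lemma stein_sol_increment_sum:
  assumes l: "l > 0" and "finite A"
  shows "(\<Sum>k\<in>A. stein_sol l k (Suc (Suc i)) - stein_sol l k (Suc i)) \<le> (1 - exp (- l)) / l"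
proof -
  have "(\<Sum>k\<in>A. stein_sol l k (Suc (Suc i)) - stein_sol l k (Suc i))
        \<le> (\<Sum>k\<in>A. if k = Suc i then (1 - exp (- l)) / l else 0)"
    by (rule sum_mono) (rule stein_sol_increment[OF l refl])
  also have "\<dots> \<le> (1 - exp (- l)) / l"
    using l by (simp add: sum.delta[OF \<open>finite A\<close>])
  finally show ?thesis .
qed

section \<open>Binomial weights and the Binomial-Poisson estimate\<close>

definition binw :: "nat \<Rightarrow> real \<Rightarrow> nat \<Rightarrow> real" where
  "binw n q j = real (n choose j) * q ^ j * (1 - q) ^ (n - j)"

lemma binw_nonneg: "0 \<le> q \<Longrightarrow> q \<le> 1 \<Longrightarrow> 0 \<le> binw n q j"
  by (simp add: binw_def)

lemma binw_sum: "(\<Sum>j\<le>n. binw n q j) = 1"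
  using binomial_ring[of q "1 - q" n] by (simp add: binw_def)

lemma binw_high: "n < j \<Longrightarrow> binw n q j = 0"
  by (simp add: binw_def)

text \<open>Pascal's rule, in the form of a recursion for binomial expectations.\<close>
lemma binw_expectation_Suc:
  "(\<Sum>j\<le>Suc m. binw (Suc m) q j * f j)
   = (1 - q) * (\<Sum>j\<le>m. binw m q j * f j) + q * (\<Sum>j\<le>m. binw m q j * f (Suc j))"
proof -
  have pascal: "binw (Suc m) q (Suc i) = q * binw m q i + (1 - q) * binw m q (Suc i)" for i
  proof (cases "i < m")
    case True
    hence "m - i = Suc (m - Suc i)" by simp
    thus ?thesis by (simp add: binw_def algebra_simps)
  qed (simp add: binw_def binomial_eq_0)
  have "(\<Sum>j\<le>Suc m. binw (Suc m) q j * f j)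
        = binw (Suc m) q 0 * f 0 + (\<Sum>i\<le>m. binw (Suc m) q (Suc i) * f (Suc i))"
    by (simp add: sum.atMost_Suc_shift del: sum.atMost_Suc)
  also have "\<dots> = (1 - q) * (binw m q 0 * f 0 + (\<Sum>i\<le>m. binw m q (Suc i) * f (Suc i)))
                  + q * (\<Sum>i\<le>m. binw m q i * f (Suc i))"
  proof -
    have "binw (Suc m) q 0 = (1 - q) * binw m q 0" by (simp add: binw_def)
    moreover have "(\<Sum>i\<le>m. binw (Suc m) q (Suc i) * f (Suc i))
        = q * (\<Sum>i\<le>m. binw m q i * f (Suc i)) + (1 - q) * (\<Sum>i\<le>m. binw m q (Suc i) * f (Suc i))"
      by (simp add: pascal distrib_right sum.distrib sum_distrib_left mult.assoc)
    ultimately show ?thesis by (simp add: distrib_left)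
  qed
  also have "binw m q 0 * f 0 + (\<Sum>i\<le>m. binw m q (Suc i) * f (Suc i)) = (\<Sum>j\<le>Suc m. binw m q j * f j)"
    by (simp add: sum.atMost_Suc_shift del: sum.atMost_Suc)
  also have "\<dots> = (\<Sum>j\<le>m. binw m q j * f j)" by (simp add: binw_high)
  finally show ?thesis .
qed

lemma binw_size_bias:
  "(\<Sum>j\<le>Suc m. binw (Suc m) q j * (real j * f j)) = real (Suc m) * q * (\<Sum>j\<le>m. binw m q j * f (Suc j))"
proof -
  have e: "binw (Suc m) q (Suc i) * real (Suc i) = real (Suc m) * q * binw m q i" for i
  proof -
    have c: "real (Suc m choose Suc i) * real (Suc i) = real (Suc m) * real (m choose i)"
      using Suc_times_binomial_eq[of m i] by (metis of_nat_mult)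
    have "binw (Suc m) q (Suc i) * real (Suc i)
          = (real (Suc m choose Suc i) * real (Suc i)) * (q * q ^ i * (1 - q) ^ (m - i))"
      by (simp add: binw_def mult_ac del: of_nat_Suc binomial_Suc_Suc)
    also have "\<dots> = real (Suc m) * q * binw m q i"
      unfolding c by (simp add: binw_def mult_ac del: of_nat_Suc)
    finally show ?thesis .
  qed
  have "(\<Sum>j\<le>Suc m. binw (Suc m) q j * (real j * f j))
        = (\<Sum>i\<le>m. binw (Suc m) q (Suc i) * real (Suc i) * f (Suc i))"
    by (simp add: sum.atMost_Suc_shift mult.assoc del: sum.atMost_Suc of_nat_Suc)
  also have "\<dots> = real (Suc m) * q * (\<Sum>j\<le>m. binw m q j * f (Suc j))"
    by (simp only: e) (simp add: sum_distrib_left mult.assoc)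
  finally show ?thesis .
qed

lemma binw_stein_identity:
  assumes "l = real (Suc m) * q"
  shows "(\<Sum>j\<le>Suc m. binw (Suc m) q j * (l * h (Suc j) - real j * h j))
       = l * q * (\<Sum>j\<le>m. binw m q j * (h (Suc (Suc j)) - h (Suc j)))"
proof -
  have "(\<Sum>j\<le>Suc m. binw (Suc m) q j * (l * h (Suc j) - real j * h j))
        = l * (\<Sum>j\<le>Suc m. binw (Suc m) q j * h (Suc j))
          - (\<Sum>j\<le>Suc m. binw (Suc m) q j * (real j * h j))"
    by (simp add: algebra_simps sum_subtractf sum_distrib_left)
  also note binw_expectation_Suc[of m q "\<lambda>j. h (Suc j)"]
  also have "(\<Sum>j\<le>Suc m. binw (Suc m) q j * (real j * h j)) = l * (\<Sum>j\<le>m. binw m q j * h (Suc j))"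
    unfolding assms by (rule binw_size_bias)
  finally show ?thesis by (simp add: algebra_simps sum_subtractf sum_distrib_left)
qed

lemma binw_minus_pois:
  assumes q: "0 < q" "q \<le> 1" and l: "l = real (Suc m) * q" and k: "k \<le> Suc m"
  shows "binw (Suc m) q k - pois l k
         = l * q * (\<Sum>j\<le>m. binw m q j * (stein_sol l k (Suc (Suc j)) - stein_sol l k (Suc j)))"
proof -
  have lpos: "l > 0" using q l by simp
  have "(\<Sum>j\<le>Suc m. binw (Suc m) q j * (l * stein_sol l k (Suc j) - real j * stein_sol l k j))
        = (\<Sum>j\<le>Suc m. (if j = k then binw (Suc m) q j else 0) - binw (Suc m) q j * pois l k)"
    by (rule sum.cong) (simp_all add: stein_equation[OF lpos] right_diff_distrib)
  also have "\<dots> = binw (Suc m) q k - pois l k"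
    using k binw_sum[of "Suc m" q]
    by (simp add: sum_subtractf sum_distrib_right[symmetric] sum.delta' del: sum.atMost_Suc)
  finally show ?thesis using binw_stein_identity[OF l, of "stein_sol l k"] by simp
qed

lemma binw_minus_pois_on_set:
  assumes q: "0 < q" "q \<le> 1" and l: "l = real (Suc m) * q" and A: "A \<subseteq> {..Suc m}"
  shows "(\<Sum>k\<in>A. binw (Suc m) q k - pois l k) \<le> (1 - exp (- l)) * q"
proof -
  have lpos: "l > 0" using q l by simp
  have fA: "finite A" using A finite_subset by blast
  have "(\<Sum>k\<in>A. binw (Suc m) q k - pois l k)
        = l * q * (\<Sum>j\<le>m. binw m q j * (\<Sum>k\<in>A. stein_sol l k (Suc (Suc j)) - stein_sol l k (Suc j)))"
    using A by (simp add: binw_minus_pois[OF q l] subset_iff sum_distrib_left sum.swap[of _ A])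
  also have "\<dots> \<le> l * q * (\<Sum>j\<le>m. binw m q j * ((1 - exp (- l)) / l))"
    using lpos q by (intro mult_left_mono sum_mono stein_sol_increment_sum fA binw_nonneg) auto
  also have "\<dots> = l * q * ((\<Sum>j\<le>m. binw m q j) * ((1 - exp (- l)) / l))"
    by (simp only: sum_distrib_right)
  also have "\<dots> = (1 - exp (- l)) * q"
    using lpos by (simp add: binw_sum)
  finally show ?thesis .
qed

lemma abs_sums_twice_positive_part:
  fixes d :: "nat \<Rightarrow> real"
  assumes sd: "d sums 0" and S: "finite S" and neg: "\<And>k. k \<notin> S \<Longrightarrow> d k \<le> 0"
  shows "(\<lambda>k. \<bar>d k\<bar>) sums (2 * (\<Sum>k\<in>{k\<in>S. d k > 0}. d k))"
proof -
  have "(\<lambda>k. max (d k) 0) sums (\<Sum>k\<in>S. max (d k) 0)"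
    by (rule sums_finite[OF S]) (use neg in \<open>simp add: max_def\<close>)
  moreover have "(\<Sum>k\<in>S. max (d k) 0) = (\<Sum>k\<in>{k\<in>S. d k > 0}. d k)"
  proof -
    have "(\<Sum>k\<in>S. max (d k) 0) = (\<Sum>k\<in>S. if d k > 0 then d k else 0)"
      by (rule sum.cong) (auto simp: max_def)
    thus ?thesis by (simp add: sum.inter_filter[OF S])
  qed
  ultimately have "(\<lambda>k. 2 * max (d k) 0 - d k) sums (2 * (\<Sum>k\<in>{k\<in>S. d k > 0}. d k) - 0)"
    using sums_diff[OF sums_mult[of _ _ 2] sd] by simp
  moreover have "(\<lambda>k. 2 * max (d k) 0 - d k) = (\<lambda>k. \<bar>d k\<bar>)" by (rule ext) (simp add: max_def)
  ultimately show ?thesis by simp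
qed

lemma binomial_poisson_l1:
  assumes q: "0 < q" "q \<le> 1" and n: "0 < n"
  shows "summable (\<lambda>k. \<bar>pmf (binomial_pmf n q) k - pois (real n * q) k\<bar>)"
    and "(\<Sum>k. \<bar>pmf (binomial_pmf n q) k - pois (real n * q) k\<bar>) \<le> 2 * (min (real n * q) 1 * q)"
proof -
  obtain m where m: "n = Suc m" using n by (cases n) auto
  define l where "l = real n * q"
  define d where "d k = pmf (binomial_pmf n q) k - pois l k" for k
  have lpos: "l > 0" using q n by (simp add: l_def)
  have d_eq: "d k = binw (Suc m) q k - pois l k" for k
    using q by (simp add: d_def binw_def m)
  have "binw (Suc m) q sums 1"
    using sums_finite[of "{..Suc m}" "binw (Suc m) q"] binw_high[of "Suc m"] binw_sum[of "Suc m" q]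
    by (simp del: sum.atMost_Suc)
  hence "d sums 0" unfolding d_eq[abs_def] using sums_diff[OF _ pois_sums] by fastforce
  moreover have "d k \<le> 0" if "k \<notin> {..Suc m}" for k
    using that binw_high[of "Suc m" k q] pois_pos[OF lpos, of k] by (simp add: d_eq)
  ultimately have S: "(\<lambda>k. \<bar>d k\<bar>) sums (2 * (\<Sum>k\<in>{k\<in>{..Suc m}. d k > 0}. d k))"
    by (intro abs_sums_twice_positive_part) auto
  thus "summable (\<lambda>k. \<bar>pmf (binomial_pmf n q) k - pois (real n * q) k\<bar>)"
    by (simp add: sums_summable d_def l_def)
  have "(\<Sum>k\<in>{k\<in>{..Suc m}. d k > 0}. d k) \<le> (1 - exp (- l)) * q"
    unfolding d_eq by (rule binw_minus_pois_on_set[OF q]) (auto simp: l_def m)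
  also have "\<dots> \<le> min l 1 * q"
    using q exp_ge_add_one_self[of "- l"] exp_gt_zero[of "- l"] by (intro mult_right_mono) auto
  finally show "(\<Sum>k. \<bar>pmf (binomial_pmf n q) k - pois (real n * q) k\<bar>) \<le> 2 * (min (real n * q) 1 * q)"
    using sums_unique[OF S] by (simp add: d_def l_def)
qed

text \<open>Boundedness of the
  weights and of the pointwise bound G only serves to make all integrals exist.\<close>
lemma l1_distance_of_mixtures:
  fixes R :: "'a pmf" and B P :: "'a \<Rightarrow> nat \<Rightarrow> real" and G :: "'a \<Rightarrow> real"
  assumes bounds: "\<And>x k. x \<in> set_pmf R \<Longrightarrow> \<bar>B x k\<bar> \<le> 1 \<and> \<bar>P x k\<bar> \<le> 1 \<and> G x \<le> C"
    and pointwise: "\<And>x. x \<in> set_pmf R \<Longrightarrow>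
                      summable (\<lambda>k. \<bar>B x k - P x k\<bar>) \<and> (\<Sum>k. \<bar>B x k - P x k\<bar>) \<le> G x"
  shows "(\<Sum>k. \<bar>(\<integral>x. B x k \<partial>R) - (\<integral>x. P x k \<partial>R)\<bar>) \<le> (\<integral>x. G x \<partial>R)"
proof -
  have intB: "integrable R (\<lambda>x. B x k)" and intP: "integrable R (\<lambda>x. P x k)" for k
    using bounds by (auto intro!: measure_pmf.integrable_const_bound[where B=1] simp: AE_measure_pmf_iff)
  have "G x \<ge> 0" if "x \<in> set_pmf R" for x
    using pointwise[OF that] suminf_nonneg[of "\<lambda>k. \<bar>B x k - P x k\<bar>"] by auto
  hence intG: "integrable R G"
    using bounds by (intro measure_pmf.integrable_const_bound[where B=C]) (auto simp: AE_measure_pmf_iff)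
  have intA: "integrable R (\<lambda>x. \<bar>B x k - P x k\<bar>)" for k
    using intB intP by auto
  have partial: "(\<Sum>k<n. \<bar>(\<integral>x. B x k \<partial>R) - (\<integral>x. P x k \<partial>R)\<bar>) \<le> (\<integral>x. G x \<partial>R)" for n
  proof -
    have "(\<Sum>k<n. \<bar>(\<integral>x. B x k \<partial>R) - (\<integral>x. P x k \<partial>R)\<bar>) = (\<Sum>k<n. \<bar>\<integral>x. B x k - P x k \<partial>R\<bar>)"
      by (simp only: Bochner_Integration.integral_diff[OF intB intP])
    also have "\<dots> \<le> (\<Sum>k<n. \<integral>x. \<bar>B x k - P x k\<bar> \<partial>R)"
    proof (rule sum_mono)
      fix k
      show "\<bar>\<integral>x. B x k - P x k \<partial>R\<bar> \<le> (\<integral>x. \<bar>B x k - P x k\<bar> \<partial>R)"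
        using integral_norm_bound[of R "\<lambda>x. B x k - P x k"] by (simp only: real_norm_def)
    qed
    also have "\<dots> = (\<integral>x. (\<Sum>k<n. \<bar>B x k - P x k\<bar>) \<partial>R)"
      by (rule Bochner_Integration.integral_sum[symmetric]) (rule intA)
    also have "\<dots> \<le> (\<integral>x. G x \<partial>R)"
    proof (rule integral_mono_AE)
      show "AE x in R. (\<Sum>k<n. \<bar>B x k - P x k\<bar>) \<le> G x"
        unfolding AE_measure_pmf_iff
      proof
        fix x assume x: "x \<in> set_pmf R"
        have "(\<Sum>k<n. \<bar>B x k - P x k\<bar>) \<le> (\<Sum>k. \<bar>B x k - P x k\<bar>)"
          using pointwise[OF x] by (intro sum_le_suminf) auto
        thus "(\<Sum>k<n. \<bar>B x k - P x k\<bar>) \<le> G x" using pointwise[OF x] by linarith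
      qed
    qed (use intA intG in auto)
    finally show ?thesis .
  qed
  show ?thesis
    by (rule suminf_le_const[OF summableI_nonneg_bounded[OF _ partial] partial]) simp
qed

section \<open>The drawn count of a colour is a binomial mixture\<close>

lemma pmf_of_multiset_is_colour:
  assumes "M \<noteq> {#}"
  shows "map_pmf (\<lambda>x. x = i) (pmf_of_multiset M) = bernoulli_pmf (count M i / size M)"
proof (rule pmf_eqI)
  fix b :: bool
  have le: "count M i / size M \<le> 1"
    using assms count_le_size[of M i] by (simp add: divide_le_eq_1 nonempty_has_size)
  have "pmf (map_pmf (\<lambda>x. x = i) (pmf_of_multiset M)) True = measure_pmf.prob (pmf_of_multiset M) {i}"
    by (simp add: pmf_map vimage_def)
  also have "\<dots> = count M i / size M" using assms by (simp add: measure_pmf_single)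
  finally show "pmf (map_pmf (\<lambda>x. x = i) (pmf_of_multiset M)) b = pmf (bernoulli_pmf (count M i / size M)) b"
    using le by (cases b) (simp_all add: pmf_False_conv_True)
qed

lemma count_of_draws_binomial:
  assumes "M \<noteq> {#}"
  shows "map_pmf (\<lambda>ds. count (mset ds) i) (replicate_pmf n (pmf_of_multiset M))
         = binomial_pmf n (count M i / size M)"
proof -
  have le: "count M i / size M \<le> 1"
    using assms count_le_size[of M i] by (simp add: divide_le_eq_1 nonempty_has_size)
  show ?thesis
  proof (induction n)
    case 0
    show ?case using le by (simp add: binomial_pmf_0)
  next
    case (Suc n)
    have "binomial_pmf (Suc n) (count M i / size M) =
           do {b \<leftarrow> bernoulli_pmf (count M i / size M);
               k \<leftarrow> binomial_pmf n (count M i / size M);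
               return_pmf ((if b then 1 else 0) + k)}"
      using le by (intro binomial_pmf_Suc) simp
    also have "\<dots> = do {x \<leftarrow> pmf_of_multiset M; xs \<leftarrow> replicate_pmf n (pmf_of_multiset M);
                       return_pmf ((if x = i then 1 else 0) + count (mset xs) i)}"
      unfolding pmf_of_multiset_is_colour[OF assms, symmetric] Suc.IH[symmetric]
      by (simp add: bind_map_pmf)
    also have "\<dots> = map_pmf (\<lambda>ds. count (mset ds) i) (replicate_pmf (Suc n) (pmf_of_multiset M))"
      by (simp add: map_pmf_def bind_assoc_pmf bind_return_pmf cong: if_cong)
         (intro bind_pmf_cong refl, simp)
    finally show ?case ..
  qed
qed

lemma urn_balls_count:
  assumes "i < length vs"
  shows "count (urn_balls vs) i = vs ! i"
proof -
  have "count (mset (concat (map (\<lambda>j. replicate (vs ! j) j) [0..<n]))) i = (if i < n then vs ! i else 0)" for n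
    by (induction n) auto
  thus ?thesis using assms by (simp add: urn_balls_def)
qed

lemma urn_balls_size: "size (urn_balls vs) = sum_list vs"
proof -
  have "size (mset (concat (map (\<lambda>j. replicate (vs ! j) j) [0..<n]))) = (\<Sum>j=0..<n. vs ! j)" for n
    by (induction n) auto
  thus ?thesis by (simp add: urn_balls_def sum_list_sum_nth)
qed

lemma colour_counts_support:
  fixes D :: "nat pmf"
  assumes vs: "vs \<in> set_pmf (replicate_pmf K D)" and D0: "0 \<notin> set_pmf D" and i: "i < K"
  shows "0 < vs ! i" "vs ! i \<le> sum_list vs" "length vs = K"
proof -
  have len: "length vs = K" and sub: "set vs \<subseteq> set_pmf D" using vs by (auto simp: set_replicate_pmf)
  thus "length vs = K" by simp
  have "vs ! i \<in> set_pmf D" using len i sub by auto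
  thus "0 < vs ! i" using D0 by (metis gr0I)
  show "vs ! i \<le> sum_list vs" using len i by (simp add: elem_le_sum_list)
qed

lemma drawn_count_law_mixture:
  assumes D0: "0 \<notin> set_pmf D" and i: "i < K"
  shows "drawn_count_law D K p i =
           replicate_pmf K D \<bind> (\<lambda>vs. binomial_pmf (nat \<lfloor>p * real (sum_list vs)\<rfloor>)
                                                  (real (vs ! i) / real (sum_list vs)))"
  unfolding drawn_count_law_def urn_experiment_def map_bind_pmf map_return_pmf
proof (intro bind_pmf_cong refl)
  fix vs assume vs: "vs \<in> set_pmf (replicate_pmf K D)"
  note supp = colour_counts_support[OF vs D0 i]
  have "size (urn_balls vs) > 0" using supp by (simp add: urn_balls_size)
  hence "urn_balls vs \<noteq> {#}" by auto
  thus "replicate_pmf (nat \<lfloor>p * real (sum_list vs)\<rfloor>) (pmf_of_multiset (urn_balls vs)) \<bind>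
          (\<lambda>ds. return_pmf ((\<lambda>(vs, ds). count (mset ds) i) (vs, ds)))
        = binomial_pmf (nat \<lfloor>p * real (sum_list vs)\<rfloor>) (real (vs ! i) / real (sum_list vs))"
    using count_of_draws_binomial[OF \<open>urn_balls vs \<noteq> {#}\<close>] supp i
    by (simp add: map_pmf_def[symmetric] urn_balls_count urn_balls_size)
qed

section \<open>Exchangeability of i.i.d. colour counts\<close>

lemma replicate_pmf_coordinate_and_sum:
  fixes D :: "nat pmf"
  assumes "i < K"
  shows "map_pmf (\<lambda>vs. (vs ! i, sum_list vs)) (replicate_pmf K D)
         = map_pmf (\<lambda>vs. (vs ! 0, sum_list vs)) (replicate_pmf K D)"
proof -
  define r where "r = K - Suc i"
  have K: "K = i + Suc r" using assms by (simp add: r_def)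
  have L: "map_pmf (\<lambda>vs. (vs ! i, sum_list vs)) (replicate_pmf (i + Suc r) D)
     = do {xs \<leftarrow> replicate_pmf i D; y \<leftarrow> D; zs \<leftarrow> replicate_pmf r D;
           return_pmf (y, sum_list xs + (y + sum_list zs))}"
    unfolding replicate_pmf_distrib
    by (simp add: map_pmf_def bind_assoc_pmf bind_return_pmf)
       (intro bind_pmf_cong refl, auto simp: set_replicate_pmf nth_append)
  have R: "map_pmf (\<lambda>vs. (vs ! 0, sum_list vs)) (replicate_pmf (Suc (i + r)) D)
     = do {y \<leftarrow> D; xs \<leftarrow> replicate_pmf i D; zs \<leftarrow> replicate_pmf r D;
           return_pmf (y, y + (sum_list xs + sum_list zs))}"
    by (simp only: replicate_pmf.simps replicate_pmf_distrib)
       (simp add: map_pmf_def bind_assoc_pmf bind_return_pmf)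
  show ?thesis unfolding K using L R
    by simp (subst bind_commute_pmf, intro bind_pmf_cong refl, simp add: add_ac)
qed

lemma expectation_colour_exchange:
  fixes D :: "nat pmf" and f :: "nat \<Rightarrow> nat \<Rightarrow> real"
  assumes "i < K"
  shows "(\<integral>vs. f (vs ! i) (sum_list vs) \<partial>replicate_pmf K D)
         = (\<integral>vs. f (vs ! 0) (sum_list vs) \<partial>replicate_pmf K D)"
proof -
  have "(\<integral>vs. f (vs ! j) (sum_list vs) \<partial>replicate_pmf K D)
        = (\<integral>x. f (fst x) (snd x) \<partial>map_pmf (\<lambda>vs. (vs ! j, sum_list vs)) (replicate_pmf K D))" for j
    by simp
  thus ?thesis by (simp only: replicate_pmf_coordinate_and_sum[OF assms])
qed

lemma replicate_pmf_nth:
  fixes D :: "nat pmf"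
  assumes "i < K"
  shows "map_pmf (\<lambda>vs. vs ! i) (replicate_pmf K D) = D"
proof -
  have "map_pmf (\<lambda>vs. vs ! i) (replicate_pmf K D)
        = map_pmf fst (map_pmf (\<lambda>vs. (vs ! i, sum_list vs)) (replicate_pmf K D))"
    by (simp add: pmf.map_comp o_def)
  also have "\<dots> = map_pmf fst (map_pmf (\<lambda>vs. (vs ! 0, sum_list vs)) (replicate_pmf K D))"
    by (simp only: replicate_pmf_coordinate_and_sum[OF assms])
  also have "\<dots> = map_pmf (\<lambda>vs. vs ! 0) (replicate_pmf (Suc (K - 1)) D)"
    using assms by (simp add: pmf.map_comp o_def)
  also have "\<dots> = D"
    by (simp add: map_pmf_def bind_assoc_pmf bind_return_pmf bind_return_pmf')
  finally show ?thesis .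
qed

lemma mixed_poisson_mixture:
  fixes D :: "nat pmf"
  assumes "i < K"
  shows "mixed_poisson D p k = (\<integral>vs. pois (p * real (vs ! i)) k \<partial>replicate_pmf K D)"
proof -
  have "mixed_poisson D p k = (\<integral>v. pois (p * real v) k \<partial>map_pmf (\<lambda>vs. vs ! i) (replicate_pmf K D))"
    unfolding mixed_poisson_def pois_def replicate_pmf_nth[OF assms] by simp
  thus ?thesis by simp
qed

lemma draw_parameters:
  fixes D :: "nat pmf"
  assumes vs: "vs \<in> set_pmf (replicate_pmf K D)" and D0: "0 \<notin> set_pmf D" and i: "i < K"
    and p: "0 < p" and Z: "p * real (sum_list vs) \<in> \<int>"
  shows "0 < real (vs ! i) / real (sum_list vs)" "real (vs ! i) / real (sum_list vs) \<le> 1"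
    and "0 < nat \<lfloor>p * real (sum_list vs)\<rfloor>"
    and "real (nat \<lfloor>p * real (sum_list vs)\<rfloor>) * (real (vs ! i) / real (sum_list vs)) = p * real (vs ! i)"
proof -
  note supp = colour_counts_support[OF vs D0 i]
  have V: "real (sum_list vs) > 0" using supp by simp
  thus "0 < real (vs ! i) / real (sum_list vs)" "real (vs ! i) / real (sum_list vs) \<le> 1"
    using supp by simp_all
  obtain z where z: "p * real (sum_list vs) = real_of_int z" using Z Ints_cases by metis
  have "z > 0" using z p V by (metis mult_pos_pos of_int_0_less_iff)
  hence N: "real (nat \<lfloor>p * real (sum_list vs)\<rfloor>) = p * real (sum_list vs)" using z by simp
  thus "0 < nat \<lfloor>p * real (sum_list vs)\<rfloor>" using p V by (metis mult_pos_pos of_nat_0_less_iff)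
  show "real (nat \<lfloor>p * real (sum_list vs)\<rfloor>) * (real (vs ! i) / real (sum_list vs)) = p * real (vs ! i)"
  proof -
    have cancel: "\<And>a S :: real. S \<noteq> 0 \<Longrightarrow> p * S * (a / S) = p * a" by simp
    show ?thesis unfolding N using V by (intro cancel) linarith
  qed
qed

theorem mainTheorem1:
  fixes D :: "nat pmf" and K :: nat and p :: real and i :: nat
  assumes "0 \<notin> set_pmf D"
    and "K \<ge> 1"
    and "0 < p" and "p < 1"
    and "\<forall>vs \<in> set_pmf (replicate_pmf K D). p * real (sum_list vs) \<in> \<int>"
    and "i < K"
  shows "tv_dist (drawn_count_law D K p i) (mixed_poisson D p)
     \<le> measure_pmf.expectation (replicate_pmf K D)
          (\<lambda>vs. min (p * real (vs ! 0)) 1 * real (vs ! 0) / real (sum_list vs))"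
proof -
  define R where "R = replicate_pmf K D"
  define N where "N vs = nat \<lfloor>p * real (sum_list vs)\<rfloor>" for vs
  define q where "q vs = real (vs ! i) / real (sum_list vs)" for vs
  define B where "B vs k = pmf (binomial_pmf (N vs) (q vs)) k" for vs k
  define P where "P vs k = pois (p * real (vs ! i)) k" for vs k
  define g where "g vs = min (p * real (vs ! i)) 1 * real (vs ! i) / real (sum_list vs)" for vs
  have params: "0 < q vs" "q vs \<le> 1" "0 < N vs" "real (N vs) * q vs = p * real (vs ! i)"
    if "vs \<in> set_pmf R" for vs
    using draw_parameters[OF _ assms(1,6,3)] assms(5) that by (simp_all add: R_def N_def q_def)
  have law: "pmf (drawn_count_law D K p i) k = (\<integral>vs. B vs k \<partial>R)" for k
    by (simp add: drawn_count_law_mixture[OF assms(1,6)] pmf_bind B_def R_def N_def q_def)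
  have limit: "mixed_poisson D p k = (\<integral>vs. P vs k \<partial>R)" for k
    by (simp add: mixed_poisson_mixture[OF assms(6)] P_def R_def)
  have "(\<Sum>k. \<bar>(\<integral>vs. B vs k \<partial>R) - (\<integral>vs. P vs k \<partial>R)\<bar>) \<le> (\<integral>vs. 2 * g vs \<partial>R)"
  proof (rule l1_distance_of_mixtures)
    fix vs k assume vs: "vs \<in> set_pmf R"
    have "min (p * real (vs ! i)) 1 * q vs \<le> 1"
      using params(1,2)[OF vs] by (intro mult_le_one) auto
    thus "\<bar>B vs k\<bar> \<le> 1 \<and> \<bar>P vs k\<bar> \<le> 1 \<and> 2 * g vs \<le> 2"
      using pois_le_1[of "p * real (vs ! i)" k] assms(3) by (simp add: B_def P_def g_def q_def pmf_le_1)
  next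
    fix vs assume vs: "vs \<in> set_pmf R"
    note binomial_poisson_l1[OF params(1-3)[OF vs], unfolded params(4)[OF vs]]
    thus "summable (\<lambda>k. \<bar>B vs k - P vs k\<bar>) \<and> (\<Sum>k. \<bar>B vs k - P vs k\<bar>) \<le> 2 * g vs"
      by (simp add: B_def P_def g_def q_def)
  qed
  hence "tv_dist (drawn_count_law D K p i) (mixed_poisson D p) \<le> (\<integral>vs. g vs \<partial>R)"
    by (simp add: tv_dist_def law limit)
  thus ?thesis
    using expectation_colour_exchange[OF assms(6), of D "\<lambda>a V. min (p * real a) 1 * real a / real V"]
    unfolding R_def g_def by simp
qed

end
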